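(* Let $\mathcal{N}$ denote the class of all networks $(X,A_X)$, where $X$ is a finite nonempty set and $A_X:X\times X\to\mathbb{R}$ satisfies $A_X(x,x')\ge 0$ for all $x,x'\in X$, with $A_X(x,x')=0$ if and only if $x=x'$ ($A_X$ need not be symmetric nor satisfy the triangle inequality). For a network $(X,A_X)$ define the unidirectional minimum chain cost $$\tilde u^{NR}_X(x,x')=\min_{C(x,x')}\ \max_{0\le i\le l-1}A_X(x_i,x_{i+1}),$$ where the minimum is over all chains $C(x,x')=[x=x_0,x_1,\dots,x_l=x']$ of nodes of $X$ from $x$ to $x'$, and set $$u^{NR}_X(x,x')=\max\big(\tilde u^{NR}_X(x,x'),\ \tilde u^{NR}_X(x',x)\big).$$ Let $\mathcal{H}^{NR}$ be the method assigning to each network $(X,A_X)$ the function $u^{NR}_X$. Then: (i) for every network $(X,A_X)\in\mathcal{N}$, $u^{NR}_X$ is an ultrametric on $X$; and (ii) $\mathcal{H}^{NR}$ satisfies the Axiom of Value (A1) and the Axiom of Transformation (A2).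
   Context: An ultrametric on a finite set $X$ is a function $u_X:X\times X\to\mathbb{R}$ that is nonnegative, symmetric ($u_X(x,x')=u_X(x',x)$), satisfies $u_X(x,x')=0$ iff $x=x'$, and satisfies the strong triangle inequality $u_X(x,x')\le\max\big(u_X(x,x''),u_X(x'',x')\big)$ for all $x,x',x''\in X$. A (hierarchical) clustering method $\mathcal{H}$ is a map assigning to every network $(X,A_X)$ an ultrametric $u_X$ on $X$ (equivalently a dendrogram on $X$). Axiom of Value (A1): for every two-node network $X=\{p,q\}$ with $A_X(p,q)=\alpha$, $A_X(q,p)=\beta$ (with $\alpha,\beta>0$), the output ultrametric satisfies $u_X(p,q)=\max(\alpha,\beta)$. Axiom of Transformation (A2): for any two networks $(X,A_X)$, $(Y,A_Y)$ and any map $\phi:X\to Y$ with $A_X(x,x')\ge A_Y(\phi(x),\phi(x'))$ for all $x,x'\in X$, the output ultrametrics $u_X=\mathcal{H}(X,A_X)$ and $u_Y=\mathcal{H}(Y,A_Y)$ satisfy $u_X(x,x')\ge u_Y(\phi(x),\phi(x'))$ for all $x,x'\in X$. *)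

theory Defs
  imports Main "HOL.Real"
begin

text \<open>A network: finite nonempty node set X with dissimilarity A, nonnegative,
  zero exactly on the diagonal (values of A outside X are irrelevant).\<close>
definition network :: "'a set \<Rightarrow> ('a \<Rightarrow> 'a \<Rightarrow> real) \<Rightarrow> bool" where
  "network X A \<longleftrightarrow> finite X \<and> X \<noteq> {} \<and>
     (\<forall>x\<in>X. \<forall>x'\<in>X. A x x' \<ge> 0 \<and> (A x x' = 0 \<longleftrightarrow> x = x'))"

definition is_chain :: "'a set \<Rightarrow> 'a \<Rightarrow> 'a \<Rightarrow> 'a list \<Rightarrow> bool" where
  "is_chain X x x' c \<longleftrightarrow> c \<noteq> [] \<and> hd c = x \<and> last c = x' \<and> set c \<subseteq> X"

text \<open>Cost of a chain: maximum link dissimilarity (0 for the trivial chain with l = 0).\<close>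
definition chain_cost :: "('a \<Rightarrow> 'a \<Rightarrow> real) \<Rightarrow> 'a list \<Rightarrow> real" where
  "chain_cost A c = Max (insert 0 {A (c ! i) (c ! Suc i) | i. Suc i < length c})"

text \<open>Unidirectional minimum chain cost (the minimum is attained; we write it as an infimum
  over the set of all chain costs).\<close>
definition u_tilde_NR :: "'a set \<Rightarrow> ('a \<Rightarrow> 'a \<Rightarrow> real) \<Rightarrow> 'a \<Rightarrow> 'a \<Rightarrow> real" where
  "u_tilde_NR X A x x' = Inf {chain_cost A c | c. is_chain X x x' c}"

definition u_NR :: "'a set \<Rightarrow> ('a \<Rightarrow> 'a \<Rightarrow> real) \<Rightarrow> 'a \<Rightarrow> 'a \<Rightarrow> real" where
  "u_NR X A x x' = max (u_tilde_NR X A x x') (u_tilde_NR X A x' x)"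

definition ultrametric :: "'a set \<Rightarrow> ('a \<Rightarrow> 'a \<Rightarrow> real) \<Rightarrow> bool" where
  "ultrametric X u \<longleftrightarrow>
     (\<forall>x\<in>X. \<forall>x'\<in>X. u x x' \<ge> 0 \<and> u x x' = u x' x \<and> (u x x' = 0 \<longleftrightarrow> x = x')) \<and>
     (\<forall>x\<in>X. \<forall>x'\<in>X. \<forall>x''\<in>X. u x x' \<le> max (u x x'') (u x'' x'))"

end

theory Submission
  imports Defs
begin

text \<open>Concatenating a minimal chain from \<open>x\<close> to \<open>x''\<close> with one from \<open>x''\<close> to \<open>x'\<close> gives a chain
  from \<open>x\<close> to \<open>x'\<close> whose cost is the larger of the two, so \<open>u_tilde_NR\<close> satisfies the strong triangle
  inequality, and symmetrising by \<open>max\<close> preserves it; it vanishes exactly on the diagonal because any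
  chain leaving \<open>x\<close> pays some positive dissimilarity \<open>A x y\<close>. A dissimilarity-reducing map sends
  chains to chains of no larger cost, which gives the Axiom of Transformation, and in a two-node
  network the only step out of \<open>p\<close> is the link to \<open>q\<close>, which gives the Axiom of Value.\<close>

lemma chain_cost_eq_Max_links:
  "chain_cost A c = Max (insert 0 (case_prod A ` set (zip c (tl c))))"
proof -
  have "{A (c ! i) (c ! Suc i) | i. Suc i < length c} = case_prod A ` set (zip c (tl c))"
    unfolding set_zip by (force simp: nth_tl)
  then show ?thesis unfolding chain_cost_def by simp
qed

lemma chain_cost_nonneg: "0 \<le> chain_cost A c"
  unfolding chain_cost_eq_Max_links by (rule Max_ge) auto

lemma link_le_chain_cost: "(a, b) \<in> set (zip c (tl c)) \<Longrightarrow> A a b \<le> chain_cost A c"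
  unfolding chain_cost_eq_Max_links by (rule Max_ge) force+

lemma chain_cost_le:
  assumes "0 \<le> t" and "\<And>a b. (a, b) \<in> set (zip c (tl c)) \<Longrightarrow> A a b \<le> t"
  shows "chain_cost A c \<le> t"
  using assms unfolding chain_cost_eq_Max_links by (subst Max_le_iff) auto

lemma chain_cost_singleton: "chain_cost A [x] = 0"
  by (simp add: chain_cost_eq_Max_links)

lemma chain_cost_pair: "chain_cost A [x, y] = max 0 (A x y)"
  by (simp add: chain_cost_eq_Max_links)

lemma links_subset_chain: "(a, b) \<in> set (zip c (tl c)) \<Longrightarrow> a \<in> set c \<and> b \<in> set c"
  by (metis set_zip_leftD set_zip_rightD list.set_sel(2) list.sel(2))

lemma links_append:
  assumes "c\<^sub>1 \<noteq> []" and "c\<^sub>2 \<noteq> []" and "last c\<^sub>1 = hd c\<^sub>2"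
  shows "set (zip (c\<^sub>1 @ tl c\<^sub>2) (tl (c\<^sub>1 @ tl c\<^sub>2))) \<subseteq> set (zip c\<^sub>1 (tl c\<^sub>1)) \<union> set (zip c\<^sub>2 (tl c\<^sub>2))"
  using assms
proof (induction c\<^sub>1 rule: induct_list012)
  case 2
  then show ?case by (cases c\<^sub>2) auto
qed auto

lemma is_chain_append:
  "is_chain X x y c\<^sub>1 \<Longrightarrow> is_chain X y z c\<^sub>2 \<Longrightarrow> is_chain X x z (c\<^sub>1 @ tl c\<^sub>2)"
  unfolding is_chain_def by (cases c\<^sub>2) (auto simp: last_append)

lemma chain_cost_append_le:
  assumes "is_chain X x y c\<^sub>1" and "is_chain X y z c\<^sub>2"
  shows "chain_cost A (c\<^sub>1 @ tl c\<^sub>2) \<le> max (chain_cost A c\<^sub>1) (chain_cost A c\<^sub>2)"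
proof (rule chain_cost_le)
  show "0 \<le> max (chain_cost A c\<^sub>1) (chain_cost A c\<^sub>2)"
    using chain_cost_nonneg[of A c\<^sub>1] by linarith
next
  fix a b
  assume "(a, b) \<in> set (zip (c\<^sub>1 @ tl c\<^sub>2) (tl (c\<^sub>1 @ tl c\<^sub>2)))"
  then have "(a, b) \<in> set (zip c\<^sub>1 (tl c\<^sub>1)) \<or> (a, b) \<in> set (zip c\<^sub>2 (tl c\<^sub>2))"
    using links_append[of c\<^sub>1 c\<^sub>2] assms unfolding is_chain_def by auto
  then show "A a b \<le> max (chain_cost A c\<^sub>1) (chain_cost A c\<^sub>2)"
    by (auto dest: link_le_chain_cost[where A = A] simp: le_max_iff_disj)
qed

lemma is_chain_map:
  "is_chain X x x' c \<Longrightarrow> f ` X \<subseteq> Y \<Longrightarrow> is_chain Y (f x) (f x') (map f c)"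
  unfolding is_chain_def by (auto simp: hd_map last_map)

lemma chain_cost_map_le:
  assumes "\<forall>a\<in>set c. \<forall>b\<in>set c. B (f a) (f b) \<le> A a b"
  shows "chain_cost B (map f c) \<le> chain_cost A c"
proof (rule chain_cost_le[OF chain_cost_nonneg])
  fix a' b'
  assume "(a', b') \<in> set (zip (map f c) (tl (map f c)))"
  then obtain a b where ab: "(a, b) \<in> set (zip c (tl c))" and "a' = f a" "b' = f b"
    by (auto simp: zip_map_map map_tl[symmetric])
  then have "B a' b' \<le> A a b"
    using assms links_subset_chain[OF ab] by blast
  also have "\<dots> \<le> chain_cost A c"
    by (rule link_le_chain_cost[OF ab])
  finally show "B a' b' \<le> chain_cost A c" .
qed

lemma first_link_leaving:
  "c \<noteq> [] \<Longrightarrow> last c \<noteq> hd c \<Longrightarrow> \<exists>y. y \<noteq> hd c \<and> (hd c, y) \<in> set (zip c (tl c))"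
proof (induction c rule: induct_list012)
  case (3 a b r)
  then show ?case by (cases "b = a") auto
qed auto

lemma chain_cost_ge_first_step:
  assumes "is_chain X x x' c" and "x \<noteq> x'"
  shows "\<exists>y\<in>X. y \<noteq> x \<and> A x y \<le> chain_cost A c"
proof -
  obtain y where "y \<noteq> x" and link: "(x, y) \<in> set (zip c (tl c))"
    using first_link_leaving[of c] assms unfolding is_chain_def by auto
  moreover have "y \<in> X"
    using links_subset_chain[OF link] assms(1) unfolding is_chain_def by auto
  ultimately show ?thesis
    using link_le_chain_cost[OF link] by blast
qed

lemma u_tilde_NR_le_chain_cost:
  "is_chain X x x' c \<Longrightarrow> u_tilde_NR X A x x' \<le> chain_cost A c"
  unfolding u_tilde_NR_def
  by (rule cInf_lower) (auto intro: bdd_belowI[where m = 0] simp: chain_cost_nonneg)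

text \<open>Only the finitely many values of \<open>A\<close> on \<open>X \<times> X\<close> (and \<open>0\<close>) occur as chain costs, so the
  infimum in the definition of \<open>u_tilde_NR\<close> is a minimum.\<close>

lemma finite_chain_costs:
  assumes "finite X"
  shows "finite {chain_cost A c | c. is_chain X x x' c}"
proof -
  have "chain_cost A c \<in> insert 0 (case_prod A ` (X \<times> X))" if "is_chain X x x' c" for c
  proof -
    have "chain_cost A c \<in> insert 0 (case_prod A ` set (zip c (tl c)))"
      unfolding chain_cost_eq_Max_links by (rule Max_in) auto
    moreover have "set (zip c (tl c)) \<subseteq> X \<times> X"
      using links_subset_chain that unfolding is_chain_def by fast
    ultimately show ?thesis by blast
  qed
  then have "{chain_cost A c | c. is_chain X x x' c} \<subseteq> insert 0 (case_prod A ` (X \<times> X))"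
    by blast
  then show ?thesis
    by (rule finite_subset) (use assms in simp)
qed

lemma u_tilde_NR_attained:
  assumes "finite X" and "x \<in> X" and "x' \<in> X"
  obtains c where "is_chain X x x' c" and "u_tilde_NR X A x x' = chain_cost A c"
proof -
  let ?S = "{chain_cost A c | c. is_chain X x x' c}"
  have "is_chain X x x' [x, x']"
    using assms unfolding is_chain_def by simp
  then have nonempty: "?S \<noteq> {}" by blast
  have "Inf ?S \<in> ?S"
    using Min_in[OF finite_chain_costs[OF assms(1)] nonempty]
    by (simp only: cInf_eq_Min[OF finite_chain_costs[OF assms(1)] nonempty])
  then show ?thesis
    using that unfolding u_tilde_NR_def by blast
qed

lemma u_tilde_NR_nonneg:
  "finite X \<Longrightarrow> x \<in> X \<Longrightarrow> x' \<in> X \<Longrightarrow> 0 \<le> u_tilde_NR X A x x'"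
  by (metis u_tilde_NR_attained chain_cost_nonneg)

lemma u_tilde_NR_self: "finite X \<Longrightarrow> x \<in> X \<Longrightarrow> u_tilde_NR X A x x = 0"
  using u_tilde_NR_le_chain_cost[of X x x "[x]" A] u_tilde_NR_nonneg[of X x x A]
  by (simp add: is_chain_def chain_cost_singleton)

lemma u_tilde_NR_ge_first_step:
  assumes "finite X" and "x \<in> X" and "x' \<in> X" and "x \<noteq> x'"
  shows "\<exists>y\<in>X. y \<noteq> x \<and> A x y \<le> u_tilde_NR X A x x'"
  using u_tilde_NR_attained[OF assms(1-3)] chain_cost_ge_first_step[OF _ assms(4)] by metis

lemma u_tilde_NR_pos:
  assumes "network X A" and "x \<in> X" and "x' \<in> X" and "x \<noteq> x'"
  shows "0 < u_tilde_NR X A x x'"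
proof -
  have "finite X" using assms(1) unfolding network_def by simp
  then obtain y where "y \<in> X" "y \<noteq> x" and "A x y \<le> u_tilde_NR X A x x'"
    using u_tilde_NR_ge_first_step[OF _ assms(2-4)] by blast
  moreover have "0 < A x y"
    using assms(1,2) \<open>y \<in> X\<close> \<open>y \<noteq> x\<close> unfolding network_def by force
  ultimately show ?thesis by linarith
qed

lemma u_tilde_NR_strong_triangle:
  assumes "finite X" and "x \<in> X" and "y \<in> X" and "z \<in> X"
  shows "u_tilde_NR X A x z \<le> max (u_tilde_NR X A x y) (u_tilde_NR X A y z)"
proof -
  obtain c\<^sub>1 where c\<^sub>1: "is_chain X x y c\<^sub>1" "u_tilde_NR X A x y = chain_cost A c\<^sub>1"
    using u_tilde_NR_attained[OF assms(1-3)] .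
  obtain c\<^sub>2 where c\<^sub>2: "is_chain X y z c\<^sub>2" "u_tilde_NR X A y z = chain_cost A c\<^sub>2"
    using u_tilde_NR_attained[OF assms(1,3,4)] .
  have "u_tilde_NR X A x z \<le> chain_cost A (c\<^sub>1 @ tl c\<^sub>2)"
    by (rule u_tilde_NR_le_chain_cost[OF is_chain_append[OF c\<^sub>1(1) c\<^sub>2(1)]])
  also have "\<dots> \<le> max (chain_cost A c\<^sub>1) (chain_cost A c\<^sub>2)"
    by (rule chain_cost_append_le[OF c\<^sub>1(1) c\<^sub>2(1)])
  finally show ?thesis using c\<^sub>1(2) c\<^sub>2(2) by simp
qed

lemma u_tilde_NR_map_le:
  assumes "finite X" and "f ` X \<subseteq> Y" and "\<forall>a\<in>X. \<forall>b\<in>X. B (f a) (f b) \<le> A a b"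
    and "x \<in> X" and "x' \<in> X"
  shows "u_tilde_NR Y B (f x) (f x') \<le> u_tilde_NR X A x x'"
proof -
  obtain c where c: "is_chain X x x' c" "u_tilde_NR X A x x' = chain_cost A c"
    using u_tilde_NR_attained[OF assms(1,4,5)] .
  have "u_tilde_NR Y B (f x) (f x') \<le> chain_cost B (map f c)"
    by (rule u_tilde_NR_le_chain_cost[OF is_chain_map[OF c(1) assms(2)]])
  also have "\<dots> \<le> chain_cost A c"
    using c(1) assms(3) unfolding is_chain_def by (intro chain_cost_map_le) blast
  finally show ?thesis using c(2) by simp
qed

lemma u_tilde_NR_two_point:
  assumes "network {p, q} A" and "p \<noteq> q"
  shows "u_tilde_NR {p, q} A p q = A p q"
proof (rule antisym)
  have "0 \<le> A p q" using assms(1) unfolding network_def by simp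
  then show "u_tilde_NR {p, q} A p q \<le> A p q"
    using u_tilde_NR_le_chain_cost[of "{p, q}" p q "[p, q]" A]
    by (simp add: is_chain_def chain_cost_pair)
  show "A p q \<le> u_tilde_NR {p, q} A p q"
    using u_tilde_NR_ge_first_step[of "{p, q}" p q A] assms(2) by auto
qed

lemma ultrametric_u_NR:
  assumes "network X A"
  shows "ultrametric X (u_NR X A)"
proof -
  have fin: "finite X" using assms unfolding network_def by simp
  have "u_NR X A x x' = 0 \<longleftrightarrow> x = x'" if "x \<in> X" "x' \<in> X" for x x'
    using u_tilde_NR_self[OF fin that(1)] u_tilde_NR_pos[OF assms that]
    unfolding u_NR_def by (cases "x = x'") auto
  moreover have "u_NR X A x x' \<le> max (u_NR X A x x'') (u_NR X A x'' x')"
    if "x \<in> X" "x' \<in> X" "x'' \<in> X" for x x' x''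
    using u_tilde_NR_strong_triangle[OF fin that(1,3,2), of A]
      u_tilde_NR_strong_triangle[OF fin that(2,3,1), of A]
    unfolding u_NR_def by linarith
  ultimately show ?thesis
    unfolding ultrametric_def
    by (auto simp: u_NR_def u_tilde_NR_nonneg[OF fin] le_max_iff_disj max.commute)
qed

lemma u_NR_two_point:
  assumes "network {p, q} A" and "p \<noteq> q"
  shows "u_NR {p, q} A p q = max (A p q) (A q p)"
proof -
  have "network {q, p} A" using assms(1) by (simp add: insert_commute)
  then have "u_tilde_NR {p, q} A q p = A q p"
    using u_tilde_NR_two_point[of q p A] assms(2) by (simp add: insert_commute)
  then show ?thesis
    unfolding u_NR_def using u_tilde_NR_two_point[OF assms] by simp
qed

lemma u_NR_map_le:
  assumes "finite X" and "f ` X \<subseteq> Y" and "\<forall>a\<in>X. \<forall>b\<in>X. B (f a) (f b) \<le> A a b"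
    and "x \<in> X" and "x' \<in> X"
  shows "u_NR Y B (f x) (f x') \<le> u_NR X A x x'"
  unfolding u_NR_def
  by (rule max.mono; rule u_tilde_NR_map_le[OF assms(1-3)]) (use assms(4,5) in auto)

theorem proposition2:
  shows "(\<forall>(X :: 'a set) A. network X A \<longrightarrow> ultrametric X (u_NR X A))
    \<and> (\<forall>(p :: 'a) q A \<alpha> \<beta>. p \<noteq> q \<longrightarrow> network {p, q} A \<longrightarrow>
          A p q = \<alpha> \<longrightarrow> A q p = \<beta> \<longrightarrow> \<alpha> > 0 \<longrightarrow> \<beta> > 0 \<longrightarrow>
          u_NR {p, q} A p q = max \<alpha> \<beta>)
    \<and> (\<forall>(X :: 'a set) AX (Y :: 'b set) AY (\<phi> :: 'a \<Rightarrow> 'b).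
          network X AX \<longrightarrow> network Y AY \<longrightarrow> \<phi> ` X \<subseteq> Y \<longrightarrow>
          (\<forall>x\<in>X. \<forall>x'\<in>X. AX x x' \<ge> AY (\<phi> x) (\<phi> x')) \<longrightarrow>
          (\<forall>x\<in>X. \<forall>x'\<in>X. u_NR X AX x x' \<ge> u_NR Y AY (\<phi> x) (\<phi> x')))"
  by (auto simp: ultrametric_u_NR u_NR_two_point network_def intro!: u_NR_map_le)

end
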